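(* Let $A\in\mathbb{R}^{n\times n}$, $B\in\mathbb{R}^{n\times m}$ be (unknown) matrices of the system $\Sigma:\ \dot x=Ax+Bu,\ y=x$, with $x\in X\subset\mathbb{R}^n$, $u\in U\subset\mathbb{R}^m$. Let $T\in\mathbb{N}^+$ and data matrices $\mathcal U_{0,T}\in\mathbb{R}^{m\times T}$, $\mathcal X_{0,T},\mathcal X_{1,T},\bar{\mathcal X}_{0,T},\bar{\mathcal X}_{1,T}\in\mathbb{R}^{n\times T}$ satisfy $\mathcal X_{1,T}=A\mathcal X_{0,T}+B\mathcal U_{0,T}$ and $\bar{\mathcal X}_{1,T}=A\bar{\mathcal X}_{0,T}$, with $\mathcal X_{0,T},\bar{\mathcal X}_{0,T}$ of full row rank; let $\bar Q\in\mathbb{R}^{T\times n}$ satisfy $\bar{\mathcal X}_{0,T}\bar Q=\mathds{I}_n$. Suppose there exist $\hat\kappa>0$ and matrices $\mathcal H\in\mathbb{R}^{T\times n}$, $\hat A\in\mathbb{R}^{\hat n\times\hat n}$, $\Xi\in\mathbb{R}^{m\times\hat n}$, $\Theta\in\mathbb{R}^{n\times\hat n}$ such that (i) $\mathcal X_{0,T}\mathcal H=P^{-1}$ for some symmetric $P\succ0$; (ii) with $Q:=\mathcal H P$ (so $\mathcal X_{0,T}Q=\mathds{I}_n$), the matrix $\mathcal U_{0,T}Q$ has full row rank and, writing $B_{\mathrm{d}}:=(\mathcal X_{1,T}Q-\bar{\mathcal X}_{1,T}\bar Q)(\mathcal U_{0,T}Q)^\dagger$, one has $\bar{\mathcal X}_{1,T}\bar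 Q\,\Theta=\Theta\hat A-B_{\mathrm{d}}\Xi$; (iii) $\mathcal H^\top\mathcal X_{1,T}^\top+\mathcal X_{1,T}\mathcal H\preceq-\hat\kappa\,\mathcal X_{0,T}\mathcal H$. Let $\hat B\in\mathbb{R}^{\hat n\times\hat m}$ be arbitrary, $\Psi\in\mathbb{R}^{m\times\hat m}$ arbitrary, $\hat C=\Theta$, and consider the reduced-order model $\hat\Sigma:\ \dot{\hat x}=\hat A\hat x+\hat B\hat u,\ \hat y=\hat C\hat x$, with $\hat x\in\hat X\subset\mathbb{R}^{\hat n}$, $\hat u\in\hat U\subset\mathbb{R}^{\hat m}$, and the interface map $u=\mathcal U_{0,T}Q(x-\Theta\hat x)+\Xi\hat x+\Psi\hat u$. Then for any $\varepsilon$ with $0<\varepsilon<\hat\kappa$, the function $\mathcal V(x,\hat x)=(x-\Theta\hat x)^\top P(x-\Theta\hat x)$ is a simulation function from $\hat\Sigma$ to $\Sigma$ with $\alpha=\lambda_{\min}(P)$, $\kappa=\hat\kappa-\varepsilon$ and $\rho=\frac1\varepsilon\big\|\sqrt P\,(B_{\mathrm d}\Psi-\Theta\hat B)\big\|^2$; specifically, $\alpha\|x-\hat C\hat x\|^2\le\mathcal V(x,\hat x)$ for all $x\in X,\hat x\in\hat X$, and for all $x\in X,\hat x\in\hat X,\hat u\in\hat U$, with $u$ given by the interface map, $$\partial_x\mathcal V(x,\hat x)(Ax+Bu)+\partial_{\hat x}\mathcal V(x,\hat x)(\hat A\hat x+\hat B\hat u)\le-\kappa\mathcal V(x,\hat x)+\rho\|\hat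 u\|^2.$$
   Context: A simulation function (SF) from $\hat\Sigma$ to $\Sigma$ is $\mathcal V:X\times\hat X\to\mathbb{R}_0^+$ for which there are $\alpha,\kappa,\rho>0$ with $\alpha\|y-\hat y\|^2\le\mathcal V(x,\hat x)$ for all $x,\hat x$ (where $y=x$, $\hat y=\hat C\hat x$), and for all $x,\hat x,\hat u$ there is $u$ with $\mathsf L\mathcal V(x,\hat x)\le-\kappa\mathcal V(x,\hat x)+\rho\|\hat u\|^2$, where $\mathsf L\mathcal V$ is the Lie derivative along $(Ax+Bu,\hat A\hat x+\hat B\hat u)$. The data $\mathcal X_{0,T},\mathcal X_{1,T},\mathcal U_{0,T}$ are samples of state, state derivative and input along one trajectory; $\bar{\mathcal X}_{0,T},\bar{\mathcal X}_{1,T}$ along a second trajectory with zero input. $M^\dagger$ is the right pseudoinverse of a full-row-rank matrix $M$ ($MM^\dagger=\mathds I$); $\sqrt P$ is the symmetric positive definite square root; $\lambda_{\min}$ is the smallest eigenvalue; $\|\cdot\|$ is the Euclidean norm / induced matrix norm. *)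

theory Defs
  imports "HOL-Analysis.Analysis"
begin

definition full_row_rank :: "real^'c^'r \<Rightarrow> bool" where
  "full_row_rank M \<longleftrightarrow> rank M = CARD('r)"

definition sym_pos_def :: "real^'n^'n \<Rightarrow> bool" where
  "sym_pos_def P \<longleftrightarrow> transpose P = P \<and> (\<forall>x. x \<noteq> 0 \<longrightarrow> x \<bullet> (P *v x) > 0)"

definition loewner_le :: "real^'n^'n \<Rightarrow> real^'n^'n \<Rightarrow> bool" where
  "loewner_le M N \<longleftrightarrow> (\<forall>x. x \<bullet> (M *v x) \<le> x \<bullet> (N *v x))"

definition right_pinv :: "real^'c^'r \<Rightarrow> real^'r^'c" where
  "right_pinv M = transpose M ** matrix_inv (M ** transpose M)"

definition mat_sqrt :: "real^'n^'n \<Rightarrow> real^'n^'n" where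
  "mat_sqrt P = (THE S. sym_pos_def S \<and> S ** S = P)"

text \<open>Smallest eigenvalue (of a symmetric matrix; its eigenvalues are real).\<close>
definition lambda_min :: "real^'n^'n \<Rightarrow> real" where
  "lambda_min P = Min {l. \<exists>v. v \<noteq> 0 \<and> P *v v = l *\<^sub>R v}"

definition mat_norm :: "real^'c^'r \<Rightarrow> real" where
  "mat_norm M = onorm (\<lambda>x. M *v x)"

end

theory Submission
  imports Defs
begin

(* Q = H P is a right inverse of X0, so the data give X1 Q = A + B U0 Q and Xb1 Qb = A; hence
   Bd = B, and condition (ii) says Theta Ah = A Theta + B Xi. Under the interface map the error
   e = x - Theta xh then obeys e' = X1 H P e + (B Psi - Theta Bh) uh, so with z = P e the Lie
   derivative of V = e^T P e is 2 z^T X1 H z + 2 z^T (B Psi - Theta Bh) uh. Condition (iii) applied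
   to z bounds the first term by -kh z^T X0 H z = -kh V; writing P = sqrt P sqrt P, Young's
   inequality bounds the second by eps V + rho |uh|^2. The constant alpha and the square root
   exist by the spectral theorem for symmetric matrices, obtained by minimising the Rayleigh
   quotient on invariant subspaces. *)

lemma symmetric_matrix_inner_commute:
  fixes M :: "real^'n^'n"
  assumes "transpose M = M"
  shows "(M *v x) \<bullet> y = x \<bullet> (M *v y)"
  by (metis assms dot_lmul_matrix transpose_matrix_vector)

lemma quadratic_nonneg_imp_linear_coeff_zero:
  fixes a d :: real
  assumes "a \<ge> 0" and "\<And>t. 0 \<le> 2 * t * a + t\<^sup>2 * d"
  shows "a = 0"
proof (rule ccontr)
  assume "a \<noteq> 0"
  define c where "c = \<bar>d\<bar> + 1"
  have "c > 0" by (simp add: c_def add_nonneg_pos)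
  define t where "t = - a / c"
  have "0 \<le> 2 * t * a + t\<^sup>2 * d" by (rule assms(2))
  also have "\<dots> \<le> 2 * t * a + t\<^sup>2 * c"
    by (intro add_left_mono mult_left_mono) (auto simp: c_def)
  also have "\<dots> = - a\<^sup>2 / c"
    using \<open>c > 0\<close> by (simp add: t_def power2_eq_square field_simps)
  also have "\<dots> < 0" using \<open>a \<noteq> 0\<close> \<open>c > 0\<close> by simp
  finally show False by simp
qed

lemma matrix_eq_on_spanning_set:
  fixes M N :: "real^'n^'m"
  assumes "span B = UNIV" and "\<And>b. b \<in> B \<Longrightarrow> M *v b = N *v b"
  shows "M = N"
  unfolding matrix_eq
  using linear_eq_on_span[OF matrix_vector_mul_linear matrix_vector_mul_linear, of B] assms by auto

lemma symmetric_matrix_rayleigh_minimiser_eigenvector: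
  fixes M :: "real^'n^'n"
  assumes sym: "transpose M = M" and W: "subspace W" and inv: "\<And>x. x \<in> W \<Longrightarrow> M *v x \<in> W"
    and v: "v \<in> W" "norm v = 1"
    and min: "\<And>y. y \<in> W \<Longrightarrow> norm y = 1 \<Longrightarrow> v \<bullet> (M *v v) \<le> y \<bullet> (M *v y)"
  shows "M *v v = (v \<bullet> (M *v v)) *\<^sub>R v"
proof -
  define lam where "lam = v \<bullet> (M *v v)"
  have vv: "v \<bullet> v = 1" using v(2) by (simp add: dot_square_norm)
  have lower: "lam * (norm y)\<^sup>2 \<le> y \<bullet> (M *v y)" if "y \<in> W" for y
  proof (cases "y = 0")
    case False
    have "lam \<le> (y /\<^sub>R norm y) \<bullet> (M *v (y /\<^sub>R norm y))"
      unfolding lam_def using False that W by (intro min) (auto intro: subspace_scale)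
    also have "\<dots> = (y \<bullet> (M *v y)) / (norm y)\<^sup>2"
      by (simp add: matrix_vector_mult_scaleR power2_eq_square divide_inverse mult_ac)
    finally show ?thesis using False by (simp add: field_simps)
  qed simp
  define r where "r = M *v v - lam *\<^sub>R v"
  have rW: "r \<in> W" unfolding r_def using W v(1) inv by (simp add: subspace_diff subspace_scale)
  have vr: "v \<bullet> r = 0" by (simp add: r_def inner_diff_right lam_def vv)
  have "M *v v = r + lam *\<^sub>R v" by (simp add: r_def)
  then have rMv: "r \<bullet> (M *v v) = r \<bullet> r"
    using vr by (simp add: inner_add_right inner_commute)
  have "0 \<le> 2 * t * (r \<bullet> r) + t\<^sup>2 * (r \<bullet> (M *v r) - lam * (r \<bullet> r))" for t
  proof -
    have "v + t *\<^sub>R r \<in> W" using v(1) rW W by (simp add: subspace_add subspace_scale)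
    moreover have "(norm (v + t *\<^sub>R r))\<^sup>2 = 1 + t\<^sup>2 * (r \<bullet> r)"
      unfolding power2_norm_eq_inner
      by (simp add: inner_add_left inner_add_right vv vr inner_commute[of r v] power2_eq_square)
    moreover have "(v + t *\<^sub>R r) \<bullet> (M *v (v + t *\<^sub>R r))
        = lam + 2 * t * (r \<bullet> r) + t\<^sup>2 * (r \<bullet> (M *v r))"
      using symmetric_matrix_inner_commute[OF sym, of r v]
      by (simp add: matrix_vector_right_distrib matrix_vector_mult_scaleR inner_add_left inner_add_right
          lam_def rMv power2_eq_square inner_commute algebra_simps)
    ultimately show ?thesis using lower[of "v + t *\<^sub>R r"] by (simp add: algebra_simps)
  qed
  then have "r \<bullet> r = 0" by (intro quadratic_nonneg_imp_linear_coeff_zero) auto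
  then show ?thesis by (simp add: r_def lam_def)
qed

lemma symmetric_matrix_invariant_subspace_eigenvector:
  fixes M :: "real^'n^'n"
  assumes sym: "transpose M = M" and W: "subspace W" "W \<noteq> {0}"
    and inv: "\<And>x. x \<in> W \<Longrightarrow> M *v x \<in> W"
  obtains v where "v \<in> W" "norm v = 1" "M *v v = (v \<bullet> (M *v v)) *\<^sub>R v"
proof -
  define K where "K = W \<inter> sphere 0 1"
  obtain w where "w \<in> W" "w \<noteq> 0" using W subspace_0 by blast
  then have "w /\<^sub>R norm w \<in> K" using W(1) by (simp add: K_def subspace_scale)
  moreover have "compact K"
    unfolding K_def by (intro closed_Int_compact closed_subspace W(1) compact_sphere)
  moreover have "continuous_on K (\<lambda>x. x \<bullet> (M *v x))"
    by (intro continuous_intros linear_continuous_on bounded_linear.linear) auto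
  ultimately obtain v where "v \<in> K" and "\<forall>y\<in>K. v \<bullet> (M *v v) \<le> y \<bullet> (M *v y)"
    using continuous_attains_inf[of K] by blast
  then show thesis
    using symmetric_matrix_rayleigh_minimiser_eigenvector[OF sym W(1) inv, of v]
    by (intro that) (auto simp: K_def)
qed

lemma symmetric_matrix_invariant_subspace_eigenbasis:
  fixes M :: "real^'n^'n"
  assumes sym: "transpose M = M"
  shows "subspace W \<Longrightarrow> (\<And>x. x \<in> W \<Longrightarrow> M *v x \<in> W) \<Longrightarrow>
    \<exists>B. B \<subseteq> W \<and> pairwise orthogonal B \<and> span B = W \<and>
      (\<forall>b\<in>B. norm b = 1 \<and> (\<exists>l. M *v b = l *\<^sub>R b))"
proof (induction "dim W" arbitrary: W rule: less_induct)
  case less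
  show ?case
  proof (cases "W = {0}")
    case True
    then show ?thesis by (intro exI[of _ "{}"]) auto
  next
    case False
    obtain v where v: "v \<in> W" "norm v = 1" and eig: "M *v v = (v \<bullet> (M *v v)) *\<^sub>R v"
      using symmetric_matrix_invariant_subspace_eigenvector[OF sym less.prems(1) False less.prems(2)] .
    define W' where "W' = {x \<in> W. v \<bullet> x = 0}"
    have W': "subspace W'"
      using less.prems(1) unfolding W'_def subspace_def by (auto simp: inner_add_right)
    have inv': "M *v x \<in> W'" if "x \<in> W'" for x
    proof -
      have "v \<bullet> (M *v x) = (M *v v) \<bullet> x" by (simp add: symmetric_matrix_inner_commute[OF sym])
      then show ?thesis using that less.prems(2) by (subst (asm) eig) (simp add: W'_def)
    qed
    have "v \<notin> W'" using v(2) by (simp add: W'_def dot_square_norm)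
    moreover have "W' \<subseteq> W" by (auto simp: W'_def)
    ultimately have "W' \<subset> W" using v(1) by blast
    then have "dim W' < dim W"
      using dim_psubset[of W' W] W' less.prems(1) by (metis span_eq_iff)
    then obtain B' where B': "B' \<subseteq> W'" "pairwise orthogonal B'"
      "\<forall>b\<in>B'. norm b = 1 \<and> (\<exists>l. M *v b = l *\<^sub>R b)" "span B' = W'"
      using less.hyps[OF _ W' inv'] by blast
    have "W \<subseteq> span (insert v B')"
    proof
      fix x assume "x \<in> W"
      then have "x - (v \<bullet> x) *\<^sub>R v \<in> W'"
        using v less.prems(1)
        by (simp add: W'_def subspace_diff subspace_scale inner_diff_right dot_square_norm)
      then show "x \<in> span (insert v B')" using B'(4) span_breakdown_eq by blast
    qed
    moreover have "insert v B' \<subseteq> W" using v B'(1) by (auto simp: W'_def)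
    moreover then have "span (insert v B') \<subseteq> W" using less.prems(1) by (rule span_minimal)
    ultimately show ?thesis
      using B' v eig
      by (intro exI[of _ "insert v B'"])
        (auto simp: pairwise_insert W'_def orthogonal_def inner_commute)
  qed
qed

definition orthonormal_eigenbasis ::
    "real^'n^'n \<Rightarrow> (real^'n) set \<Rightarrow> (real^'n \<Rightarrow> real) \<Rightarrow> bool" where
  "orthonormal_eigenbasis M B l \<longleftrightarrow> finite B \<and> pairwise orthogonal B \<and> span B = UNIV \<and>
     (\<forall>b\<in>B. norm b = 1 \<and> M *v b = l b *\<^sub>R b)"

lemma symmetric_matrix_orthonormal_eigenbasis:
  fixes M :: "real^'n^'n"
  assumes "transpose M = M"
  obtains B l where "orthonormal_eigenbasis M B l"
proof -
  obtain B where B: "pairwise orthogonal B" "\<forall>b\<in>B. norm b = 1 \<and> (\<exists>l. M *v b = l *\<^sub>R b)"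
    "span B = UNIV"
    using symmetric_matrix_invariant_subspace_eigenbasis[OF assms, of UNIV] by auto
  then obtain l where "\<forall>b\<in>B. M *v b = l b *\<^sub>R b" by metis
  moreover have "finite B"
    using B(1,2) pairwise_orthogonal_independent independent_imp_finite by fastforce
  ultimately show thesis using B by (intro that[of B l]) (auto simp: orthonormal_eigenbasis_def)
qed

lemma orthonormal_eigenbasis_inner:
  assumes "orthonormal_eigenbasis M B l" "b \<in> B" "c \<in> B"
  shows "b \<bullet> c = (if b = c then 1 else 0)"
  using assms by (auto simp: orthonormal_eigenbasis_def pairwise_def orthogonal_def dot_square_norm)

lemma orthonormal_eigenbasis_expansion:
  assumes "orthonormal_eigenbasis M B l"
  shows "(\<Sum>b\<in>B. (x \<bullet> b) *\<^sub>R b) = x"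
  using assms by (intro orthonormal_basis_expand) (auto simp: orthonormal_eigenbasis_def)

lemma orthonormal_eigenbasis_quadratic_form:
  assumes "orthonormal_eigenbasis M B l"
  shows "x \<bullet> (M *v x) = (\<Sum>b\<in>B. l b * (x \<bullet> b)\<^sup>2)"
proof -
  have "x \<bullet> (M *v x) = x \<bullet> (\<Sum>b\<in>B. (x \<bullet> b) *\<^sub>R (M *v b))"
    by (subst (2) orthonormal_eigenbasis_expansion[OF assms, symmetric])
      (simp add: matrix_vector_mult_scaleR linear_sum[OF matrix_vector_mul_linear])
  also have "\<dots> = (\<Sum>b\<in>B. l b * (x \<bullet> b)\<^sup>2)"
    using assms by (auto simp: orthonormal_eigenbasis_def inner_sum_right power2_eq_square
        inner_commute intro!: sum.cong)
  finally show ?thesis .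
qed

lemma orthonormal_eigenbasis_eigenvalues:
  fixes M :: "real^'n^'n"
  assumes sym: "transpose M = M" and B: "orthonormal_eigenbasis M B l"
  shows "{\<mu>. \<exists>v. v \<noteq> 0 \<and> M *v v = \<mu> *\<^sub>R v} = l ` B"
proof (intro equalityI subsetI)
  fix \<mu> assume "\<mu> \<in> {\<mu>. \<exists>v. v \<noteq> 0 \<and> M *v v = \<mu> *\<^sub>R v}"
  then obtain v where v: "v \<noteq> 0" "M *v v = \<mu> *\<^sub>R v" by blast
  obtain b where b: "b \<in> B" "v \<bullet> b \<noteq> 0"
    using orthonormal_eigenbasis_expansion[OF B, of v] v(1)
    by (metis (no_types, lifting) scale_zero_left sum.neutral)
  have "\<mu> * (v \<bullet> b) = (M *v v) \<bullet> b" by (simp add: v(2))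
  also have "\<dots> = v \<bullet> (M *v b)" by (rule symmetric_matrix_inner_commute[OF sym])
  also have "\<dots> = l b * (v \<bullet> b)" using B b(1) by (simp add: orthonormal_eigenbasis_def)
  finally show "\<mu> \<in> l ` B" using b by auto
next
  fix \<mu> assume "\<mu> \<in> l ` B"
  then obtain b where "b \<in> B" "\<mu> = l b" by blast
  with B show "\<mu> \<in> {\<mu>. \<exists>v. v \<noteq> 0 \<and> M *v v = \<mu> *\<^sub>R v}"
    by (auto simp: orthonormal_eigenbasis_def intro!: exI[of _ b])
qed

lemma sym_pos_def_eigenvalue_pos:
  assumes "sym_pos_def P" "v \<noteq> 0" "P *v v = l *\<^sub>R v"
  shows "l > 0"
proof -
  have "0 < v \<bullet> (P *v v)" using assms(1,2) by (simp add: sym_pos_def_def)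
  also have "\<dots> = l * (v \<bullet> v)" by (simp add: assms(3))
  finally show ?thesis using inner_ge_zero[of v] by (auto simp: zero_less_mult_iff)
qed

lemma orthonormal_eigenbasis_nonempty:
  assumes "orthonormal_eigenbasis M B l"
  shows "B \<noteq> {}"
proof
  assume "B = {}"
  then have "axis undefined 1 \<in> span B" using assms by (simp add: orthonormal_eigenbasis_def)
  with \<open>B = {}\<close> show False by (simp add: axis_eq_0_iff)
qed

lemma orthonormal_eigenbasis_rayleigh_lower_bound:
  assumes B: "orthonormal_eigenbasis M B l" and c: "\<And>b. b \<in> B \<Longrightarrow> c \<le> l b"
  shows "c * (norm x)\<^sup>2 \<le> x \<bullet> (M *v x)"
proof -
  have "orthonormal_eigenbasis (mat 1) B (\<lambda>_. 1)"
    using B by (simp add: orthonormal_eigenbasis_def)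
  from orthonormal_eigenbasis_quadratic_form[OF this, of x]
  have "c * (norm x)\<^sup>2 = (\<Sum>b\<in>B. c * (x \<bullet> b)\<^sup>2)"
    by (simp add: power2_norm_eq_inner sum_distrib_left)
  also have "\<dots> \<le> (\<Sum>b\<in>B. l b * (x \<bullet> b)\<^sup>2)"
    by (intro sum_mono mult_right_mono c) auto
  also have "\<dots> = x \<bullet> (M *v x)"
    by (rule orthonormal_eigenbasis_quadratic_form[OF B, symmetric])
  finally show ?thesis .
qed

lemma orthonormal_eigenbasis_sym_pos_def:
  assumes sym: "transpose M = M" and B: "orthonormal_eigenbasis M B l"
    and pos: "\<And>b. b \<in> B \<Longrightarrow> l b > 0"
  shows "sym_pos_def M"
proof -
  have fin: "finite (l ` B)" "l ` B \<noteq> {}"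
    using B orthonormal_eigenbasis_nonempty[OF B] by (auto simp: orthonormal_eigenbasis_def)
  have "0 < x \<bullet> (M *v x)" if "x \<noteq> 0" for x
  proof -
    have "0 < Min (l ` B) * (norm x)\<^sup>2" using fin pos that by auto
    also have "\<dots> \<le> x \<bullet> (M *v x)"
      using fin by (intro orthonormal_eigenbasis_rayleigh_lower_bound[OF B]) auto
    finally show ?thesis .
  qed
  then show ?thesis using sym by (simp add: sym_pos_def_def)
qed

lemma lambda_min_sym_pos_def:
  fixes P :: "real^'n^'n"
  assumes P: "sym_pos_def P"
  shows "lambda_min P > 0" and "lambda_min P * (norm x)\<^sup>2 \<le> x \<bullet> (P *v x)"
proof -
  have sym: "transpose P = P" using P by (simp add: sym_pos_def_def)
  obtain B l where B: "orthonormal_eigenbasis P B l"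
    by (rule symmetric_matrix_orthonormal_eigenbasis[OF sym])
  have lambda: "lambda_min P = Min (l ` B)"
    unfolding lambda_min_def orthonormal_eigenbasis_eigenvalues[OF sym B] ..
  have fin: "finite (l ` B)" "l ` B \<noteq> {}"
    using B orthonormal_eigenbasis_nonempty[OF B] by (auto simp: orthonormal_eigenbasis_def)
  have "l b > 0" if "b \<in> B" for b
    using B that by (intro sym_pos_def_eigenvalue_pos[OF P, of b]) (auto simp: orthonormal_eigenbasis_def)
  then show "lambda_min P > 0" using fin by (simp add: lambda)
  show "lambda_min P * (norm x)\<^sup>2 \<le> x \<bullet> (P *v x)"
    unfolding lambda using fin by (intro orthonormal_eigenbasis_rayleigh_lower_bound[OF B]) auto
qed

lemma sym_pos_def_sqrt_on_eigenvector:
  assumes T: "sym_pos_def T" "T ** T = P" and b: "P *v b = l *\<^sub>R b" and l: "l \<ge> 0"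
  shows "T *v b = sqrt l *\<^sub>R b"
proof (rule ccontr)
  define y where "y = T *v b - sqrt l *\<^sub>R b"
  assume "T *v b \<noteq> sqrt l *\<^sub>R b"
  then have "y \<noteq> 0" by (simp add: y_def)
  have "T *v y = (T ** T) *v b - sqrt l *\<^sub>R (T *v b)"
    by (simp add: y_def matrix_vector_mult_diff_distrib matrix_vector_mult_scaleR matrix_vector_mul_assoc)
  also have "\<dots> = - sqrt l *\<^sub>R y"
    using l by (simp add: T(2) b y_def algebra_simps)
  finally have "y \<bullet> (T *v y) = - sqrt l * (y \<bullet> y)" by simp
  also have "\<dots> \<le> 0" using l by simp
  finally show False using T(1) \<open>y \<noteq> 0\<close> by (simp add: sym_pos_def_def not_le[symmetric])
qed

lemma sym_pos_def_sqrt_exists: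
  fixes P :: "real^'n^'n"
  assumes P: "sym_pos_def P"
  shows "\<exists>S. sym_pos_def S \<and> S ** S = P"
proof -
  have sym: "transpose P = P" using P by (simp add: sym_pos_def_def)
  obtain B l where B: "orthonormal_eigenbasis P B l"
    by (rule symmetric_matrix_orthonormal_eigenbasis[OF sym])
  have l: "l b > 0" if "b \<in> B" for b
    using B that by (intro sym_pos_def_eigenvalue_pos[OF P, of b]) (auto simp: orthonormal_eigenbasis_def)
  define S :: "real^'n^'n" where "S = (\<chi> i j. \<Sum>b\<in>B. sqrt (l b) * b$i * b$j)"
  have Sx: "S *v x = (\<Sum>b\<in>B. (sqrt (l b) * (x \<bullet> b)) *\<^sub>R b)" for x
    by (simp add: S_def vec_eq_iff matrix_vector_mult_def inner_vec_def sum_component sum_distrib_left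
        sum_distrib_right sum.swap[of _ B] mult_ac)
  have Sb: "S *v c = sqrt (l c) *\<^sub>R c" if c: "c \<in> B" for c
  proof -
    have "S *v c = (\<Sum>b\<in>B. if b = c then sqrt (l c) *\<^sub>R c else 0)"
      unfolding Sx using orthonormal_eigenbasis_inner[OF B _ c] by (intro sum.cong) (auto simp: inner_commute)
    then show ?thesis using B c by (simp add: orthonormal_eigenbasis_def)
  qed
  have S: "orthonormal_eigenbasis S B (\<lambda>b. sqrt (l b))"
    using B Sb by (simp add: orthonormal_eigenbasis_def)
  have "sym_pos_def S"
    by (rule orthonormal_eigenbasis_sym_pos_def[OF _ S])
      (auto simp: S_def transpose_def vec_eq_iff mult_ac l)
  moreover have "S ** S = P"
  proof (rule matrix_eq_on_spanning_set)
    show "span B = UNIV" using B by (simp add: orthonormal_eigenbasis_def)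
    show "(S ** S) *v b = P *v b" if "b \<in> B" for b
      using that B l[OF that] by (simp add: matrix_vector_mul_assoc[symmetric] Sb matrix_vector_mult_scaleR
          orthonormal_eigenbasis_def)
  qed
  ultimately show ?thesis by blast
qed

lemma sym_pos_def_sqrt_unique:
  fixes P :: "real^'n^'n"
  assumes P: "sym_pos_def P" and S: "sym_pos_def S" "S ** S = P" and T: "sym_pos_def T" "T ** T = P"
  shows "S = T"
proof -
  have sym: "transpose P = P" using P by (simp add: sym_pos_def_def)
  obtain B l where B: "orthonormal_eigenbasis P B l"
    by (rule symmetric_matrix_orthonormal_eigenbasis[OF sym])
  show ?thesis
  proof (rule matrix_eq_on_spanning_set)
    show "span B = UNIV" using B by (simp add: orthonormal_eigenbasis_def)
    fix b assume "b \<in> B"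
    then have "P *v b = l b *\<^sub>R b" "l b > 0"
      using B by (auto simp: orthonormal_eigenbasis_def intro!: sym_pos_def_eigenvalue_pos[OF P, of b])
    then show "S *v b = T *v b"
      using sym_pos_def_sqrt_on_eigenvector[OF S, of b "l b"] sym_pos_def_sqrt_on_eigenvector[OF T, of b "l b"]
      by simp
  qed
qed

lemma mat_sqrt_sym_pos_def:
  assumes "sym_pos_def P"
  shows "sym_pos_def (mat_sqrt P)" and "mat_sqrt P ** mat_sqrt P = P"
proof -
  have "\<exists>!S. sym_pos_def S \<and> S ** S = P"
    using sym_pos_def_sqrt_exists[OF assms] sym_pos_def_sqrt_unique[OF assms] by blast
  then have "sym_pos_def (mat_sqrt P) \<and> mat_sqrt P ** mat_sqrt P = P"
    unfolding mat_sqrt_def by (rule theI')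
  then show "sym_pos_def (mat_sqrt P)" and "mat_sqrt P ** mat_sqrt P = P" by auto
qed

lemma matrix_inv_invertible:
  fixes M :: "real^'n^'n"
  assumes "invertible M"
  shows "M ** matrix_inv M = mat 1" and "matrix_inv M ** M = mat 1"
proof -
  have "M ** matrix_inv M = mat 1 \<and> matrix_inv M ** M = mat 1"
    using assms unfolding invertible_def matrix_inv_def by (rule someI_ex)
  then show "M ** matrix_inv M = mat 1" and "matrix_inv M ** M = mat 1" by auto
qed

lemma invertible_iff_ker_trivial:
  fixes M :: "real^'n^'n"
  shows "invertible M \<longleftrightarrow> (\<forall>x. M *v x = 0 \<longrightarrow> x = 0)"
  by (simp add: invertible_left_inverse matrix_left_invertible_ker)

lemma sym_pos_def_invertible:
  assumes "sym_pos_def P"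
  shows "invertible P"
  using assms by (auto simp: invertible_iff_ker_trivial sym_pos_def_def)

lemma right_pinv_right_inverse:
  fixes K :: "real^'c^'r"
  assumes "full_row_rank K"
  shows "K ** right_pinv K = mat 1"
proof -
  have inj: "inj ((*v) (transpose K))"
    using assms by (simp add: full_row_rank_def rank_transpose full_rank_injective[symmetric])
  have "invertible (K ** transpose K)"
    unfolding invertible_iff_ker_trivial
  proof (intro allI impI)
    fix y assume "(K ** transpose K) *v y = 0"
    then have "(transpose K *v y) \<bullet> (transpose K *v y) = 0"
      by (simp add: dot_lmul_matrix matrix_vector_mul_assoc[symmetric])
    then show "y = 0"
      using inj by (simp add: linear_injective_0[OF matrix_vector_mul_linear])
  qed
  then show ?thesis
    unfolding right_pinv_def by (metis matrix_mul_assoc matrix_inv_invertible(1))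
qed

lemma matrix_add_rdistrib: "(A + B) ** C = A ** C + B ** C"
  by (vector matrix_matrix_mult_def sum.distrib[symmetric] field_simps)

lemma data_closed_loop_matrix:
  assumes "X1 = A ** X0 + B ** U0" and "X0 ** Q = mat 1"
  shows "X1 ** Q = A + B ** (U0 ** Q)"
  using assms by (simp add: matrix_add_rdistrib flip: matrix_mul_assoc)

lemma data_driven_input_matrix:
  fixes A :: "real^'n^'n" and B :: "real^'m^'n" and U0 :: "real^'t^'m"
    and X0 X1 Xb0 Xb1 :: "real^'t^'n" and Q Qb :: "real^'n^'t"
  assumes "X1 = A ** X0 + B ** U0" and "X0 ** Q = mat 1"
    and "Xb1 = A ** Xb0" and "Xb0 ** Qb = mat 1"
    and "full_row_rank (U0 ** Q)"
  shows "(X1 ** Q - Xb1 ** Qb) ** right_pinv (U0 ** Q) = B"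
proof -
  have "X1 ** Q - Xb1 ** Qb = B ** (U0 ** Q)"
    using data_closed_loop_matrix[OF assms(1,2)] assms(3,4) by (simp flip: matrix_mul_assoc)
  then have "(X1 ** Q - Xb1 ** Qb) ** right_pinv (U0 ** Q) = B ** ((U0 ** Q) ** right_pinv (U0 ** Q))"
    by (simp only: matrix_mul_assoc)
  also have "\<dots> = B" by (simp add: right_pinv_right_inverse[OF assms(5)])
  finally show ?thesis .
qed

lemma interface_error_dynamics:
  fixes A :: "real^'n^'n" and B :: "real^'m^'n" and K :: "real^'n^'m"
    and Theta :: "real^'k^'n" and Ah :: "real^'k^'k" and Xi :: "real^'k^'m"
    and Bh :: "real^'l^'k" and Psi :: "real^'l^'m"
  assumes "Theta ** Ah = A ** Theta + B ** Xi"
  shows "(A *v x + B *v (K *v (x - Theta *v xh) + Xi *v xh + Psi *v uh)) - Theta *v (Ah *v xh + Bh *v uh)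
    = (A + B ** K) *v (x - Theta *v xh) + (B ** Psi - Theta ** Bh) *v uh"
proof -
  have "Theta *v (Ah *v xh) = A *v (Theta *v xh) + B *v (Xi *v xh)"
    by (simp add: matrix_vector_mul_assoc assms matrix_vector_mult_add_rdistrib)
  then show ?thesis
    by (simp add: matrix_vector_right_distrib matrix_vector_mult_diff_distrib
        matrix_vector_mult_add_rdistrib matrix_vector_mult_diff_rdistrib
        flip: matrix_vector_mul_assoc)
qed

lemma quadratic_error_has_derivative:
  fixes P :: "real^'n^'n" and Theta :: "real^'k^'n"
  assumes sym: "transpose P = P"
  shows "((\<lambda>(x, xh). (x - Theta *v xh) \<bullet> (P *v (x - Theta *v xh))) has_derivative
           (\<lambda>(dx, dxh). 2 * ((P *v (x - Theta *v xh)) \<bullet> (dx - Theta *v dxh)))) (at (x, xh))"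
proof -
  define g where "g = (\<lambda>z :: (real^'n) \<times> (real^'k). fst z - Theta *v snd z)"
  have g: "bounded_linear g"
    unfolding g_def by (intro bounded_linear_sub bounded_linear_fst
        bounded_linear_compose[OF matrix_vector_mul_bounded_linear bounded_linear_snd])
  have "((\<lambda>z. g z \<bullet> (P *v g z)) has_derivative
      (\<lambda>h. g (x, xh) \<bullet> (P *v g h) + g h \<bullet> (P *v g (x, xh)))) (at (x, xh))"
    by (intro has_derivative_inner bounded_linear_imp_has_derivative g
        bounded_linear_compose[OF matrix_vector_mul_bounded_linear g])
  moreover have "g (x, xh) \<bullet> (P *v g h) + g h \<bullet> (P *v g (x, xh)) = 2 * ((P *v g (x, xh)) \<bullet> g h)"
    for h
    using symmetric_matrix_inner_commute[OF sym, of "g (x, xh)" "g h"] by (simp add: inner_commute)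
  ultimately show ?thesis by (simp add: g_def case_prod_beta' del: inner_commute)
qed

lemma inner_le_young:
  fixes a b :: "'a::real_inner"
  assumes "e > 0"
  shows "2 * (a \<bullet> b) \<le> e * (a \<bullet> a) + (b \<bullet> b) / e"
proof -
  have "0 \<le> (e *\<^sub>R a - b) \<bullet> (e *\<^sub>R a - b) / e" using assms by simp
  also have "\<dots> = e * (a \<bullet> a) - 2 * (a \<bullet> b) + (b \<bullet> b) / e"
    using assms by (simp add: inner_diff_left inner_diff_right inner_commute field_simps)
  finally show ?thesis by simp
qed

lemma loewner_le_symmetric_part:
  fixes M N :: "real^'n^'n"
  assumes "loewner_le (transpose M + M) N"
  shows "2 * (z \<bullet> (M *v z)) \<le> z \<bullet> (N *v z)"
proof -
  have "z \<bullet> (transpose M *v z) = z \<bullet> (M *v z)"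
    by (metis dot_lmul_matrix inner_commute transpose_matrix_vector)
  then have "z \<bullet> ((transpose M + M) *v z) = 2 * (z \<bullet> (M *v z))"
    by (simp add: matrix_vector_mult_add_rdistrib inner_add_right)
  then show ?thesis using assms by (metis loewner_le_def)
qed

lemma sqrt_weighted_cross_term_bound:
  fixes P S :: "real^'n^'n" and W :: "real^'l^'n"
  assumes S: "transpose S = S" "S ** S = P" and eps: "eps > 0"
  shows "2 * ((P *v e) \<bullet> (W *v u))
    \<le> eps * (e \<bullet> (P *v e)) + (1 / eps) * (mat_norm (S ** W))\<^sup>2 * (norm u)\<^sup>2"
proof -
  define a where "a = S *v e"
  define b where "b = (S ** W) *v u"
  have P: "P *v v = S *v (S *v v)" for v by (simp add: S(2) matrix_vector_mul_assoc)
  have "(P *v e) \<bullet> (W *v u) = (S *v (S *v e)) \<bullet> (W *v u)" by (simp add: P)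
  also have "\<dots> = (S *v e) \<bullet> (S *v (W *v u))" by (rule symmetric_matrix_inner_commute[OF S(1)])
  also have "\<dots> = a \<bullet> b" by (simp add: a_def b_def matrix_vector_mul_assoc)
  finally have "2 * ((P *v e) \<bullet> (W *v u)) \<le> eps * (a \<bullet> a) + (b \<bullet> b) / eps"
    using inner_le_young[OF eps] by simp
  also have "a \<bullet> a = e \<bullet> (P *v e)"
    unfolding a_def P by (rule symmetric_matrix_inner_commute[OF S(1)])
  also have "(b \<bullet> b) / eps \<le> (mat_norm (S ** W))\<^sup>2 * (norm u)\<^sup>2 / eps"
  proof -
    have "norm b \<le> mat_norm (S ** W) * norm u"
      unfolding b_def mat_norm_def by (rule onorm[OF matrix_vector_mul_bounded_linear])
    then have "(norm b)\<^sup>2 \<le> (mat_norm (S ** W) * norm u)\<^sup>2" by (intro power_mono) auto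
    then show ?thesis
      using eps by (simp add: power2_norm_eq_inner power_mult_distrib divide_right_mono)
  qed
  finally show ?thesis by simp
qed

lemma quadratic_lyapunov_decrease:
  fixes P S M N :: "real^'n^'n" and W :: "real^'l^'n"
  assumes "transpose S = S" "S ** S = P"
    and "loewner_le (transpose M + M) (- kh *\<^sub>R N)" and "N ** P = mat 1" and "eps > 0"
  shows "2 * ((P *v e) \<bullet> ((M ** P) *v e + W *v u))
    \<le> - (kh - eps) * (e \<bullet> (P *v e)) + (1 / eps) * (mat_norm (S ** W))\<^sup>2 * (norm u)\<^sup>2"
proof -
  have "2 * ((P *v e) \<bullet> (M *v (P *v e))) \<le> (P *v e) \<bullet> ((- kh *\<^sub>R N) *v (P *v e))"
    using assms(3) by (rule loewner_le_symmetric_part)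
  also have "(- kh *\<^sub>R N) *v (P *v e) = - kh *\<^sub>R (N *v (P *v e))"
    by (rule scaleR_matrix_vector_assoc[symmetric])
  also have "N *v (P *v e) = e" by (simp add: matrix_vector_mul_assoc assms(4))
  finally have "2 * ((P *v e) \<bullet> (M *v (P *v e))) \<le> - kh * (e \<bullet> (P *v e))"
    by (simp add: inner_commute)
  then show ?thesis
    using sqrt_weighted_cross_term_bound[OF assms(1,2,5), of e W u]
    by (simp add: inner_add_right matrix_vector_mul_assoc algebra_simps)
qed

theorem theorem2:
  fixes A :: "real^'n^'n" and B :: "real^'m^'n"
    and U0 :: "real^'t^'m" and X0 X1 Xb0 Xb1 :: "real^'t^'n"
    and Qb H :: "real^'n^'t"
    and P :: "real^'n^'n"
    and Ah :: "real^'k^'k" and Xi :: "real^'k^'m" and Theta :: "real^'k^'n"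
    and Bh :: "real^'l^'k" and Psi :: "real^'l^'m"
    and X :: "(real^'n) set" and Xh :: "(real^'k) set" and Uh :: "(real^'l) set"
    and kh eps :: real
  defines "Q \<equiv> H ** P"
  defines "Bd \<equiv> (X1 ** Q - Xb1 ** Qb) ** right_pinv (U0 ** Q)"
  defines "V \<equiv> (\<lambda>(x::real^'n, xh::real^'k). (x - Theta *v xh) \<bullet> (P *v (x - Theta *v xh)))"
  defines "Ch \<equiv> Theta"
  defines "alpha \<equiv> lambda_min P"
  defines "kappa \<equiv> kh - eps"
  defines "rho \<equiv> (1 / eps) * (mat_norm (mat_sqrt P ** (Bd ** Psi - Theta ** Bh)))\<^sup>2"
  assumes data1: "X1 = A ** X0 + B ** U0"
    and data2: "Xb1 = A ** Xb0"
    and rk0: "full_row_rank X0" and rkb0: "full_row_rank Xb0"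
    and Qb: "Xb0 ** Qb = mat 1"
    and kh_pos: "kh > 0"
    and P_pd: "sym_pos_def P"
    and cond1: "X0 ** H = matrix_inv P"
    and cond2a: "full_row_rank (U0 ** Q)"
    and cond2b: "Xb1 ** Qb ** Theta = Theta ** Ah - Bd ** Xi"
    and cond3: "loewner_le (transpose H ** transpose X1 + X1 ** H) (- kh *\<^sub>R (X0 ** H))"
    and eps: "0 < eps" "eps < kh"
  shows "alpha > 0 \<and> kappa > 0
    \<and> (\<forall>x\<in>X. \<forall>xh\<in>Xh. alpha * (norm (x - Ch *v xh))\<^sup>2 \<le> V (x, xh))
    \<and> (\<forall>x\<in>X. \<forall>xh\<in>Xh. \<forall>uh\<in>Uh.
         let u = (U0 ** Q) *v (x - Theta *v xh) + Xi *v xh + Psi *v uh in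
         \<exists>D. (V has_derivative D) (at (x, xh))
           \<and> D (A *v x + B *v u, Ah *v xh + Bh *v uh) \<le> - kappa * V (x, xh) + rho * (norm uh)\<^sup>2)"
proof -
  have sym: "transpose P = P" using P_pd by (simp add: sym_pos_def_def)
  have X0HP: "(X0 ** H) ** P = mat 1"
    using cond1 sym_pos_def_invertible[OF P_pd] by (simp add: matrix_inv_invertible)
  then have X0Q: "X0 ** Q = mat 1" by (simp add: Q_def matrix_mul_assoc)
  have Bd: "Bd = B"
    unfolding Bd_def using data1 X0Q data2 Qb cond2a by (rule data_driven_input_matrix)
  have closed_loop: "A + B ** (U0 ** Q) = (X1 ** H) ** P"
    using data_closed_loop_matrix[OF data1 X0Q] by (simp add: Q_def matrix_mul_assoc)
  have "Xb1 ** Qb = A" using data2 Qb by (simp flip: matrix_mul_assoc)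
  then have Theta_Ah: "Theta ** Ah = A ** Theta + B ** Xi" using cond2b Bd by (simp add: algebra_simps)
  have lyap: "loewner_le (transpose (X1 ** H) + X1 ** H) (- kh *\<^sub>R (X0 ** H))"
    using cond3 by (simp add: matrix_transpose_mul)
  have decrease: "\<exists>D. (V has_derivative D) (at (x, xh))
      \<and> D (A *v x + B *v u, Ah *v xh + Bh *v uh) \<le> - kappa * V (x, xh) + rho * (norm uh)\<^sup>2"
    if "u = (U0 ** Q) *v (x - Theta *v xh) + Xi *v xh + Psi *v uh" for x xh uh u
  proof -
    define D where "D = (\<lambda>(dx, dxh). 2 * ((P *v (x - Theta *v xh)) \<bullet> (dx - Theta *v dxh)))"
    have "(V has_derivative D) (at (x, xh))"
      unfolding V_def D_def by (rule quadratic_error_has_derivative[OF sym])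
    moreover have "D (A *v x + B *v u, Ah *v xh + Bh *v uh) \<le> - kappa * V (x, xh) + rho * (norm uh)\<^sup>2"
      using quadratic_lyapunov_decrease[OF _ mat_sqrt_sym_pos_def(2)[OF P_pd] lyap X0HP eps(1)]
        mat_sqrt_sym_pos_def(1)[OF P_pd]
      by (simp add: D_def that interface_error_dynamics[OF Theta_Ah] closed_loop V_def kappa_def
          rho_def Bd sym_pos_def_def)
    ultimately show ?thesis by blast
  qed
  show ?thesis
    using lambda_min_sym_pos_def[OF P_pd] decrease eps by (simp add: alpha_def kappa_def Ch_def V_def)
qed

end
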